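(* Let $\pi\in[n]^m$ be any picking sequence over a set of $m$ chores, and let agent $i$ have an additive disvaluation $c_i$; order the chores so that $c_i(e_1)\ge c_i(e_2)\ge\cdots\ge c_i(e_m)$ and let $R_i=\{r:\pi_r=i\}$. If agent $i$ follows the greedy picking strategy, then for all disvaluation functions and strategies of the other agents, the bundle she receives has disvalue at most $\sum_{r\in R_i}c_i(e_{m-r+1})$; and this worst case is attained when the instance is identically ordered (every agent's disvaluation is non-increasing along $e_1,\ldots,e_m$) and all other agents also follow the greedy picking strategy.
   Context: Picking sequence: in round $r$ agent $\pi_r$ takes one chore among those not taken earlier. Greedy picking strategy: in each own round take a remaining chore of smallest own disvalue. Disvaluations are additive and nonnegative. *)

theory Defs
  imports Complex_Main
begin

text \<open>Chores form a finite set E with card E = m; rounds are 1..m.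
  A run of the picking sequence is recorded by sigma, where sigma r is the chore
  taken in round r; a run takes every chore exactly once.\<close>

definition picking_run :: "'b set \<Rightarrow> nat \<Rightarrow> (nat \<Rightarrow> 'b) \<Rightarrow> bool" where
  "picking_run E m \<sigma> \<longleftrightarrow> bij_betw \<sigma> {1..m} E"

definition remaining :: "'b set \<Rightarrow> (nat \<Rightarrow> 'b) \<Rightarrow> nat \<Rightarrow> 'b set" where
  "remaining E \<sigma> r = E - \<sigma> ` {1..<r}"

definition greedy_pick :: "('a \<Rightarrow> 'b \<Rightarrow> real) \<Rightarrow> 'a \<Rightarrow> 'b set \<Rightarrow> (nat \<Rightarrow> 'b) \<Rightarrow> nat \<Rightarrow> bool" where
  "greedy_pick c j E \<sigma> r \<longleftrightarrow> (\<forall>x \<in> remaining E \<sigma> r. c j (\<sigma> r) \<le> c j x)"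

definition rounds_of :: "(nat \<Rightarrow> 'a) \<Rightarrow> nat \<Rightarrow> 'a \<Rightarrow> nat set" where
  "rounds_of \<pi> m i = {r \<in> {1..m}. \<pi> r = i}"

definition bundle_of :: "(nat \<Rightarrow> 'a) \<Rightarrow> (nat \<Rightarrow> 'b) \<Rightarrow> nat \<Rightarrow> 'a \<Rightarrow> 'b set" where
  "bundle_of \<pi> \<sigma> m i = \<sigma> ` rounds_of \<pi> m i"

end

theory Submission
  imports Defs
begin

text \<open>Agent i's own ordering puts her r cheapest chores at positions m - r + 1, ..., m.
  Before her round r only r - 1 chores have been taken, so one of these r is still available
  and a greedy pick costs her at most c i (e (m - r + 1)). Conversely, when all agents order
  the chores alike and all pick greedily, the run simply takes the chores from the cheap end,
  round r taking e (m - r + 1), so every bound is attained.\<close>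

lemma sum_bundle_of:
  assumes "picking_run E m \<sigma>"
  shows "(\<Sum>x \<in> bundle_of \<pi> \<sigma> m i. f x) = (\<Sum>r \<in> rounds_of \<pi> m i. f (\<sigma> r))"
proof -
  have "inj_on \<sigma> {1..m}"
    using assms bij_betw_imp_inj_on unfolding picking_run_def by blast
  moreover have "rounds_of \<pi> m i \<subseteq> {1..m}"
    unfolding rounds_of_def by blast
  ultimately have "inj_on \<sigma> (rounds_of \<pi> m i)"
    by (rule inj_on_subset)
  then show ?thesis
    unfolding bundle_of_def by (simp add: sum.reindex)
qed

lemma card_remaining:
  assumes "picking_run E m \<sigma>" and "finite E" and "card E = m" and "1 \<le> r" and "r \<le> m"
  shows "card (remaining E \<sigma> r) = m - r + 1"
proof -
  have bij: "bij_betw \<sigma> {1..m} E" using assms(1) unfolding picking_run_def .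
  have taken: "\<sigma> ` {1..<r} \<subseteq> E"
    using bij assms(5) bij_betw_imp_surj_on by fastforce
  have "inj_on \<sigma> {1..<r}"
    using bij assms(5) bij_betw_imp_inj_on inj_on_subset[of \<sigma> "{1..m}" "{1..<r}"] by fastforce
  then have "card (\<sigma> ` {1..<r}) = r - 1" by (simp add: card_image)
  then show ?thesis
    unfolding remaining_def using card_Diff_subset[OF _ taken] assms(2-5)
    by (simp add: finite_subset)
qed

lemma remaining_meets_last_positions:
  assumes "picking_run E m \<sigma>" and "finite E" and "card E = m" and "1 \<le> r" and "r \<le> m"
    and e_bij: "bij_betw e {1..m} E"
  obtains k where "m - r < k" and "k \<le> m" and "e k \<in> remaining E \<sigma> r"
proof -
  have "\<not> remaining E \<sigma> r \<subseteq> e ` {1..m - r}"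
  proof
    assume "remaining E \<sigma> r \<subseteq> e ` {1..m - r}"
    then have "card (remaining E \<sigma> r) \<le> card (e ` {1..m - r})" by (intro card_mono) auto
    also have "\<dots> \<le> m - r" using card_image_le[of "{1..m - r}" e] by simp
    finally show False using card_remaining[OF assms(1-5)] by simp
  qed
  then obtain x where x: "x \<in> remaining E \<sigma> r" "x \<notin> e ` {1..m - r}" by blast
  then have "x \<in> e ` {1..m}"
    using e_bij bij_betw_imp_surj_on unfolding remaining_def by blast
  then obtain k where "k \<in> {1..m}" "x = e k" by blast
  with x show ?thesis by (intro that[of k]) (auto simp: not_less)
qed

lemma greedy_pick_le_last_positions:
  assumes "picking_run E m \<sigma>" and "finite E" and "card E = m" and "1 \<le> r" and "r \<le> m"
    and "bij_betw e {1..m} E"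
    and sorted: "\<forall>k l. 1 \<le> k \<longrightarrow> k \<le> l \<longrightarrow> l \<le> m \<longrightarrow> c i (e l) \<le> c i (e k)"
    and "greedy_pick c i E \<sigma> r"
  shows "c i (\<sigma> r) \<le> c i (e (m - r + 1))"
proof -
  obtain k where k: "m - r < k" "k \<le> m" "e k \<in> remaining E \<sigma> r"
    using remaining_meets_last_positions[OF assms(1-6)] .
  have "c i (\<sigma> r) \<le> c i (e k)"
    using assms(8) k(3) unfolding greedy_pick_def by blast
  also have "\<dots> \<le> c i (e (m - r + 1))"
    using sorted k assms(4,5) by auto
  finally show ?thesis .
qed

lemma greedy_bundle_le:
  assumes "picking_run E m \<sigma>" and "finite E" and "card E = m"
    and "bij_betw e {1..m} E"
    and "\<forall>k l. 1 \<le> k \<longrightarrow> k \<le> l \<longrightarrow> l \<le> m \<longrightarrow> c i (e l) \<le> c i (e k)"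
    and greedy: "\<forall>r \<in> rounds_of \<pi> m i. greedy_pick c i E \<sigma> r"
  shows "(\<Sum>x \<in> bundle_of \<pi> \<sigma> m i. c i x) \<le> (\<Sum>r \<in> rounds_of \<pi> m i. c i (e (m - r + 1)))"
  unfolding sum_bundle_of[OF assms(1)]
proof (rule sum_mono)
  fix r assume r: "r \<in> rounds_of \<pi> m i"
  then have "1 \<le> r" and "r \<le> m" and "greedy_pick c i E \<sigma> r"
    using greedy unfolding rounds_of_def by auto
  then show "c i (\<sigma> r) \<le> c i (e (m - r + 1))"
    using greedy_pick_le_last_positions[of E m \<sigma> r e c i] assms(1-5) by blast
qed

lemma picking_run_reverse:
  assumes "bij_betw e {1..m} E"
  shows "picking_run E m (\<lambda>r. e (m - r + 1))"
proof -
  have "bij_betw (\<lambda>r. m - r + 1) {1..m} {1..m}"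
    by (rule bij_betw_byWitness[where f' = "\<lambda>r. m - r + 1"]) auto
  from bij_betw_trans[OF this assms] show ?thesis
    unfolding picking_run_def by (simp add: comp_def)
qed

lemma remaining_reverse_subset:
  assumes "bij_betw e {1..m} E"
  shows "remaining E (\<lambda>r. e (m - r + 1)) r \<subseteq> e ` {1..m - r + 1}"
proof
  fix x assume x: "x \<in> remaining E (\<lambda>r. e (m - r + 1)) r"
  then obtain k where k: "k \<in> {1..m}" "x = e k"
    using assms bij_betw_imp_surj_on unfolding remaining_def by blast
  have "k \<le> m - r + 1"
  proof (rule ccontr)
    assume "\<not> k \<le> m - r + 1"
    then have "m - k + 1 \<in> {1..<r}" and "e (m - (m - k + 1) + 1) = x"
      using k by auto
    with x show False unfolding remaining_def by blast
  qed
  with k show "x \<in> e ` {1..m - r + 1}" by auto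
qed

lemma greedy_pick_reverse:
  assumes "bij_betw e {1..m} E" and "1 \<le> r" and "r \<le> m"
    and sorted: "\<forall>k l. 1 \<le> k \<longrightarrow> k \<le> l \<longrightarrow> l \<le> m \<longrightarrow> c j (e l) \<le> c j (e k)"
  shows "greedy_pick c j E (\<lambda>r. e (m - r + 1)) r"
  unfolding greedy_pick_def
proof
  fix x assume "x \<in> remaining E (\<lambda>r. e (m - r + 1)) r"
  then obtain k where "k \<in> {1..m - r + 1}" and "x = e k"
    using remaining_reverse_subset[OF assms(1)] by blast
  then show "c j (e (m - r + 1)) \<le> c j x"
    using sorted assms(2,3) by simp
qed

theorem lemma1:
  fixes \<pi> :: "nat \<Rightarrow> 'a" and c :: "'a \<Rightarrow> 'b \<Rightarrow> real" and E :: "'b set"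
    and m :: nat and i :: 'a and e :: "nat \<Rightarrow> 'b"
  assumes "finite E" and "card E = m"
    and nonneg: "\<forall>j. \<forall>x\<in>E. 0 \<le> c j x"
    and e_bij: "bij_betw e {1..m} E"
    and e_sorted: "\<forall>k l. 1 \<le> k \<longrightarrow> k \<le> l \<longrightarrow> l \<le> m \<longrightarrow> c i (e l) \<le> c i (e k)"
  shows "(\<forall>\<sigma>. picking_run E m \<sigma> \<and> (\<forall>r \<in> rounds_of \<pi> m i. greedy_pick c i E \<sigma> r) \<longrightarrow>
            (\<Sum>x \<in> bundle_of \<pi> \<sigma> m i. c i x) \<le> (\<Sum>r \<in> rounds_of \<pi> m i. c i (e (m - r + 1))))
       \<and> ((\<forall>j k l. 1 \<le> k \<longrightarrow> k \<le> l \<longrightarrow> l \<le> m \<longrightarrow> c j (e l) \<le> c j (e k)) \<longrightarrow>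
            (\<exists>\<sigma>. picking_run E m \<sigma> \<and> (\<forall>r \<in> {1..m}. greedy_pick c (\<pi> r) E \<sigma> r) \<and>
                 (\<Sum>x \<in> bundle_of \<pi> \<sigma> m i. c i x) = (\<Sum>r \<in> rounds_of \<pi> m i. c i (e (m - r + 1)))))"
proof (intro conjI allI impI)
  fix \<sigma> assume "picking_run E m \<sigma> \<and> (\<forall>r \<in> rounds_of \<pi> m i. greedy_pick c i E \<sigma> r)"
  then show "(\<Sum>x \<in> bundle_of \<pi> \<sigma> m i. c i x) \<le> (\<Sum>r \<in> rounds_of \<pi> m i. c i (e (m - r + 1)))"
    using greedy_bundle_le[where c = c and i = i, OF _ assms(1,2) e_bij e_sorted] by blast
next
  assume identically_ordered: "\<forall>j k l. 1 \<le> k \<longrightarrow> k \<le> l \<longrightarrow> l \<le> m \<longrightarrow> c j (e l) \<le> c j (e k)"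
  define \<sigma> where "\<sigma> = (\<lambda>r. e (m - r + 1))"
  have "picking_run E m \<sigma>"
    unfolding \<sigma>_def using picking_run_reverse[OF e_bij] .
  moreover have "\<forall>r \<in> {1..m}. greedy_pick c (\<pi> r) E \<sigma> r"
  proof
    fix r assume "r \<in> {1..m}"
    then show "greedy_pick c (\<pi> r) E \<sigma> r"
      unfolding \<sigma>_def using identically_ordered
      by (intro greedy_pick_reverse[OF e_bij]) auto
  qed
  moreover have "(\<Sum>x \<in> bundle_of \<pi> \<sigma> m i. c i x) = (\<Sum>r \<in> rounds_of \<pi> m i. c i (e (m - r + 1)))"
    using sum_bundle_of[OF \<open>picking_run E m \<sigma>\<close>] by (simp add: \<sigma>_def)
  ultimately show "\<exists>\<sigma>. picking_run E m \<sigma> \<and> (\<forall>r \<in> {1..m}. greedy_pick c (\<pi> r) E \<sigma> r) \<and>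
                 (\<Sum>x \<in> bundle_of \<pi> \<sigma> m i. c i x) = (\<Sum>r \<in> rounds_of \<pi> m i. c i (e (m - r + 1)))"
    by blast
qed

end
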